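(* (1) Let $1\le i,j\le d$ with $i\ne j$ and $m,n\in\mathbb Z_{<0}$. Then there is $\alpha\in\mathbb C\setminus\{0\}$ with $v^{ij}(m,n)\mathbf 1=\alpha\,L_r^{ii}(-1)^{-m-1}L_r^{jj}(-1)^{-n-1}L_r^{ij}(-2)\mathbf 1$ in $M_r$. (2) Let $1\le i\le d$ and $m,n\in\mathbb Z_{<0}$ with $m\le -2$, and let $1\le j\le d$ with $j\ne i$ be arbitrary. Then there is $\beta\in\mathbb C\setminus\{0\}$ with $v^{ii}(m,n)\mathbf 1=\beta\,L_r^{ii}(0)L_r^{ij}(-1)L_r^{ii}(-1)^{-n-1}L_r^{jj}(-1)^{-m-2}L_r^{ij}(-2)\mathbf 1$.
   Context: Fix an integer $d\ge 2$ and $r\in\mathbb{C}$. Let $\hat{\mathfrak h}$ be the complex Lie algebra with basis $\{v^i(m)\mid 1\le i\le d,\ m\in\mathbb{Z}\}\cup\{\mathbf c\}$ and bracket $[v^i(m),v^j(n)]=\delta_{m+n,0}\delta_{i,j}\,m\,\mathbf c$, $[\mathbf c,\hat{\mathfrak h}]=0$. In $A=U(\hat{\mathfrak h})/\langle \mathbf c-1\rangle$ let $v^{ij}(m,n)$ be the image of $v^i(m)v^j(n)$; then $v^{ij}(m,n)=v^{ji}(n,m)$ unless $i=j$ and $m=-n$, and $v^{ii}(m,-m)=v^{ii}(-m,m)+m$. Let $\mathcal B=\{v^{ii}(m,n)\mid 1\le i\le d,\ m\le n\}\cup\{v^{ij}(m,n)\mid 1\le i<j\le d,\ m,n\in\mathbb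 Z\}$; then $\mathcal B\cup\{1\}$ is linearly independent, $\mathcal L:=\mathrm{span}_{\mathbb C}\mathcal B\oplus\mathbb C\subset A$ contains every $v^{ij}(m,n)$ and is closed under $[x,y]=xy-yx$. With $\pi_1,\pi_2$ the projections of $\mathcal L$ onto $\mathrm{span}\,\mathcal B$ and onto $\mathbb C$, $[x,y]_r=\pi_1([x,y])+r\pi_2([x,y])$ is a Lie bracket on $\mathcal L$; call this Lie algebra $\mathcal L_r$. Let $\mathcal B_+=\{v^{ij}(m,n)\in\mathcal B\mid m\ge 0\text{ or }n\ge 0\}$, $\mathcal L_r^+=\mathrm{span}\,\mathcal B_+\oplus\mathbb C$, and $M_r=U(\mathcal L_r)\otimes_{U(\mathcal L_r^+)}\mathbb C\mathbf 1$, where $\mathcal B_+$ acts by $0$ on $\mathbf 1$ and $s\in\mathbb C\subset\mathcal L_r$ acts by the scalar $s$. Define operators on $M_r$: $L_r^{ij}(m)=\frac12\sum_{h\in\mathbb Z}v^{ij}(m-h,h)$ if $i\ne j$ or $m\ne0$, and $L_r^{ii}(0)=\frac12 v^{ii}(0,0)+\sum_{h>0}v^{ii}(-h,h)$ (on each vector only finitely many terms are nonzero). *)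

theory Defs
  imports Complex_Main
begin

text \<open>Generators: V i j m n stands for the basis element v^{ij}(m,n) of B,
  Cg stands for the element 1 of the summand C of L_r.\<close>
datatype gen = V nat nat int int | Cg

fun isB :: "nat \<Rightarrow> gen \<Rightarrow> bool" where
  "isB d (V i j m n) = (1 \<le> i \<and> i \<le> d \<and> 1 \<le> j \<and> j \<le> d \<and> (i < j \<or> (i = j \<and> m \<le> n)))"
| "isB d Cg = True"

fun posB :: "gen \<Rightarrow> bool" where
  "posB (V i j m n) = (0 \<le> m \<or> 0 \<le> n)"
| "posB Cg = False"

definition ind :: "gen \<Rightarrow> gen \<Rightarrow> complex" where
  "ind g = (\<lambda>h. if h = g then 1 else 0)"

text \<open>The element v^{ij}(m,n) of L (image of v^i(m)v^j(n) in A), written in the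
  basis B \<union> {1}, using v^{ij}(m,n)=v^{ji}(n,m) unless i=j, m=-n, and
  v^{ii}(m,-m)=v^{ii}(-m,m)+m.\<close>
definition Lv :: "nat \<Rightarrow> int \<Rightarrow> nat \<Rightarrow> int \<Rightarrow> gen \<Rightarrow> complex" where
  "Lv i m j n =
     (if i < j then ind (V i j m n)
      else if j < i then ind (V j i n m)
      else if m \<le> n then ind (V i i m n)
      else (\<lambda>g. ind (V i i n m) g + (if m + n = 0 then of_int m * ind Cg g else 0)))"

text \<open>Heisenberg bracket [v^i(a), v^j(b)] = delta_{ij} delta_{a+b,0} a (with c = 1).\<close>
definition hb :: "nat \<Rightarrow> int \<Rightarrow> nat \<Rightarrow> int \<Rightarrow> complex" where
  "hb i a j b = (if i = j \<and> a + b = 0 then of_int a else 0)"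

text \<open>Commutator in A of two basis elements of L, expanded by the Leibniz rule
  [ab,cd] = [b,c]ad + [b,d]ac + [a,c]db + [a,d]cb (the brackets of generators are
  central scalars), written in the basis B \<union> {1}.\<close>
fun brA :: "gen \<Rightarrow> gen \<Rightarrow> gen \<Rightarrow> complex" where
  "brA (V i j a b) (V k l c e) =
     (\<lambda>g. hb j b k c * Lv i a l e g + hb j b l e * Lv i a k c g
        + hb i a k c * Lv l e j b g + hb i a l e * Lv k c j b g)"
| "brA Cg _ = (\<lambda>g. 0)"
| "brA _ Cg = (\<lambda>g. 0)"

text \<open>The bracket [x,y]_r = pi_1([x,y]) + r pi_2([x,y]) on basis elements.\<close>
definition brr :: "complex \<Rightarrow> gen \<Rightarrow> gen \<Rightarrow> gen \<Rightarrow> complex" where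
  "brr r x y = (\<lambda>g. if g = Cg then r * brA x y Cg else brA x y g)"

text \<open>Elements of the tensor algebra are coefficient functions on words of generators.\<close>
type_synonym tens = "gen list \<Rightarrow> complex"

definition inF :: "nat \<Rightarrow> tens \<Rightarrow> bool" where
  "inF d p = (finite {w. p w \<noteq> 0} \<and> (\<forall>w. p w \<noteq> 0 \<longrightarrow> set w \<subseteq> {g. isB d g}))"

definition fmul :: "tens \<Rightarrow> tens \<Rightarrow> tens" where
  "fmul p q = (\<lambda>w. \<Sum>k\<in>{0..length w}. p (take k w) * q (drop k w))"

definition one :: tens where
  "one = (\<lambda>w. if w = [] then 1 else 0)"

definition gvec :: "gen \<Rightarrow> tens" where
  "gvec g = (\<lambda>w. if w = [g] then 1 else 0)"

definition emb :: "(gen \<Rightarrow> complex) \<Rightarrow> tens" where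
  "emb f = (\<lambda>w. case w of [g] \<Rightarrow> f g | _ \<Rightarrow> 0)"

definition lie_rel :: "complex \<Rightarrow> gen \<Rightarrow> gen \<Rightarrow> tens" where
  "lie_rel r x y = (\<lambda>w. fmul (gvec x) (gvec y) w - fmul (gvec y) (gvec x) w - emb (brr r x y) w)"

text \<open>J d r is the kernel of T(L_r) \<rightarrow> M_r = U(L_r) \<otimes>_{U(L_r^+)} C1:
  the two-sided ideal generated by x y - y x - [x,y]_r plus the left ideal generated
  by B_+ and by (1_L - 1).\<close>
inductive_set J :: "nat \<Rightarrow> complex \<Rightarrow> tens set" for d r where
  J_zero: "(\<lambda>w. 0) \<in> J d r"
| J_add: "x \<in> J d r \<Longrightarrow> y \<in> J d r \<Longrightarrow> (\<lambda>w. x w + y w) \<in> J d r"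
| J_smult: "x \<in> J d r \<Longrightarrow> (\<lambda>w. c * x w) \<in> J d r"
| J_lie: "isB d x \<Longrightarrow> isB d y \<Longrightarrow> inF d a \<Longrightarrow> inF d b \<Longrightarrow>
          fmul (fmul a (lie_rel r x y)) b \<in> J d r"
| J_pos: "isB d g \<Longrightarrow> posB g \<Longrightarrow> inF d a \<Longrightarrow> fmul a (gvec g) \<in> J d r"
| J_one: "inF d a \<Longrightarrow> fmul a (\<lambda>w. gvec Cg w - one w) \<in> J d r"

text \<open>Equality in M_r of the vectors represented by p and q.\<close>
definition Meq :: "nat \<Rightarrow> complex \<Rightarrow> tens \<Rightarrow> tens \<Rightarrow> bool" where
  "Meq d r p q = ((\<lambda>w. p w - q w) \<in> J d r)"

definition vact :: "nat \<Rightarrow> int \<Rightarrow> nat \<Rightarrow> int \<Rightarrow> tens \<Rightarrow> tens" where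
  "vact i m j n p = fmul (emb (Lv i m j n)) p"

text \<open>The operators L_r^{ij}(m): sums over the (finitely many) terms that are nonzero in M_r.\<close>
definition Lop :: "nat \<Rightarrow> complex \<Rightarrow> nat \<Rightarrow> nat \<Rightarrow> int \<Rightarrow> tens \<Rightarrow> tens" where
  "Lop d r i j m p =
    (if i \<noteq> j \<or> m \<noteq> 0 then
       (\<lambda>w. \<Sum>h\<in>{h. vact i (m - h) j h p \<notin> J d r}. (1/2) * vact i (m - h) j h p w)
     else
       (\<lambda>w. (1/2) * vact i 0 i 0 p w
            + (\<Sum>h\<in>{h. 0 < h \<and> vact i (- h) i h p \<notin> J d r}. vact i (- h) i h p w)))"

end

theory Submission
  imports Defs
begin

text \<open>Positive modes annihilate \<open>\<one>\<close>, so a positive element \<open>x\<close> acts on a vector \<open>y \<one>\<close> by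
  \<open>[x, y]\<^sub>r \<one>\<close>, which by the Leibniz rule is a combination of quadratic vectors with one mode
  shifted.  Hence only finitely many summands of each operator \<open>L\<^sub>r\<close> survive, and one computes:
  \<open>L\<^sup>i\<^sup>j(-2) \<one> = v\<^sup>i\<^sup>j(-1, -1) \<one> / 2\<close>; \<open>L\<^sup>j\<^sup>j(-1)\<close> maps \<open>v\<^sup>i\<^sup>j(a, b) \<one>\<close> to
  \<open>-b v\<^sup>i\<^sup>j(a, b - 1) \<one>\<close> (and symmetrically for \<open>L\<^sup>i\<^sup>i(-1)\<close>); \<open>L\<^sup>i\<^sup>j(-1)\<close> maps
  \<open>v\<^sup>i\<^sup>j(n, b) \<one>\<close> to a combination of \<open>v\<^sup>i\<^sup>i(b - 1, n) \<one>\<close> and \<open>v\<^sup>j\<^sup>j(b, n - 1) \<one>\<close>, of which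
  \<open>L\<^sup>i\<^sup>i(0)\<close> keeps only the first, multiplied by \<open>1 - b - n\<close>.  Since all modes are negative,
  every scalar that occurs is nonzero.\<close>

subsection \<open>The kernel \<open>J\<close> and equality in \<open>M_r\<close>\<close>

lemma J_sum:
  "finite S \<Longrightarrow> (\<And>h. h \<in> S \<Longrightarrow> f h \<in> J d r) \<Longrightarrow> (\<lambda>w. \<Sum>h\<in>S. f h w) \<in> J d r"
proof (induction S rule: finite_induct)
  case empty
  then show ?case using J_zero by simp
next
  case (insert x F)
  then have "(\<lambda>w. f x w + (\<Sum>h\<in>F. f h w)) \<in> J d r" by (intro J_add) auto
  then show ?case using insert by simp
qed

lemma Meq_refl: "Meq d r p p"
  unfolding Meq_def using J_zero by simp

lemma Meq_sym: "Meq d r p q \<Longrightarrow> Meq d r q p"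
  unfolding Meq_def by (drule J_smult[where c = "-1"]) simp

lemma Meq_trans [trans]: "Meq d r p q \<Longrightarrow> Meq d r q s \<Longrightarrow> Meq d r p s"
  unfolding Meq_def by (drule (1) J_add) simp

lemma Meq_add:
  "Meq d r p q \<Longrightarrow> Meq d r p' q' \<Longrightarrow> Meq d r (\<lambda>w. p w + p' w) (\<lambda>w. q w + q' w)"
  unfolding Meq_def by (drule (1) J_add) (simp add: algebra_simps)

lemma Meq_smult: "Meq d r p q \<Longrightarrow> Meq d r (\<lambda>w. c * p w) (\<lambda>w. c * q w)"
  unfolding Meq_def by (drule J_smult[where c = c]) (simp add: algebra_simps)

lemma Meq_sum:
  assumes "finite S" "\<And>h. h \<in> S \<Longrightarrow> Meq d r (f h) (g h)"
  shows "Meq d r (\<lambda>w. \<Sum>h\<in>S. f h w) (\<lambda>w. \<Sum>h\<in>S. g h w)"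
proof -
  have "(\<lambda>w. \<Sum>h\<in>S. f h w - g h w) \<in> J d r"
    using assms by (intro J_sum) (auto simp: Meq_def)
  then show ?thesis by (simp add: Meq_def sum_subtractf)
qed

lemma Meq_0_iff: "Meq d r p (\<lambda>w. 0) \<longleftrightarrow> p \<in> J d r"
  unfolding Meq_def by simp

lemma Meq_sum_mono_neutral_left:
  assumes "finite T" "S \<subseteq> T" "\<And>h. h \<in> T - S \<Longrightarrow> f h \<in> J d r"
  shows "Meq d r (\<lambda>w. \<Sum>h\<in>S. f h w) (\<lambda>w. \<Sum>h\<in>T. f h w)"
proof -
  have "(\<lambda>w. \<Sum>h\<in>T - S. f h w) \<in> J d r" using assms by (intro J_sum) auto
  then have "Meq d r (\<lambda>w. 0) (\<lambda>w. \<Sum>h\<in>T - S. f h w)" by (simp add: Meq_sym Meq_0_iff)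
  from Meq_add[OF this Meq_refl]
  have "Meq d r (\<lambda>w. 0 + (\<Sum>h\<in>S. f h w)) (\<lambda>w. (\<Sum>h\<in>T - S. f h w) + (\<Sum>h\<in>S. f h w))" .
  moreover have "(\<lambda>w. (\<Sum>h\<in>T - S. f h w) + (\<Sum>h\<in>S. f h w)) = (\<lambda>w. \<Sum>h\<in>T. f h w)"
    using assms(1,2) by (intro ext sum.subset_diff[symmetric])
  ultimately show ?thesis by simp
qed

subsection \<open>Left multiplication by degree-one tensors\<close>

lemma fmul_emb: "fmul (emb f) p w = (case w of [] \<Rightarrow> 0 | g # u \<Rightarrow> f g * p u)"
proof (cases w)
  case Nil
  then show ?thesis by (simp add: fmul_def emb_def)
next
  case (Cons g u)
  have "fmul (emb f) p w = emb f [] * p (g # u) + (\<Sum>k\<in>{0..length u}. emb f (g # take k u) * p (drop k u))"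
    unfolding fmul_def Cons by (simp only: length_Cons sum.atLeast0_atMost_Suc_shift) simp
  also have "(\<Sum>k\<in>{0..length u}. emb f (g # take k u) * p (drop k u)) = emb f [g] * p u"
    by (subst sum.atLeast_Suc_atMost) (auto simp: emb_def split: list.split intro!: sum.neutral)
  finally show ?thesis by (simp add: emb_def Cons)
qed

lemma fmul_one_left: "fmul one p = p"
proof
  fix w
  have "fmul one p w = one [] * p w + (\<Sum>k\<in>{Suc 0..length w}. one (take k w) * p (drop k w))"
    unfolding fmul_def by (subst sum.atLeast_Suc_atMost) simp_all
  also have "(\<Sum>k\<in>{Suc 0..length w}. one (take k w) * p (drop k w)) = 0"
    by (rule sum.neutral) (auto simp: one_def)
  finally show "fmul one p w = p w" by (simp add: one_def)
qed

lemma fmul_one_right: "fmul p one = p"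
proof
  fix w
  have "fmul p one w = p w * one [] + (\<Sum>k\<in>{0..length w} - {length w}. p (take k w) * one (drop k w))"
    unfolding fmul_def by (subst sum.remove[of _ "length w"]) simp_all
  also have "(\<Sum>k\<in>{0..length w} - {length w}. p (take k w) * one (drop k w)) = 0"
    by (rule sum.neutral) (auto simp: one_def)
  finally show "fmul p one w = p w" by (simp add: one_def)
qed

lemma gvec_emb: "gvec g = emb (ind g)"
  by (rule ext) (simp add: gvec_def emb_def ind_def split: list.split)

lemma fmul_emb_assoc: "fmul (emb f) (fmul a b) = fmul (fmul (emb f) a) b"
proof
  fix w
  show "fmul (emb f) (fmul a b) w = fmul (fmul (emb f) a) b w"
  proof (cases w)
    case Nil
    then show ?thesis by (simp add: fmul_emb fmul_def[of "fmul (emb f) a"])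
  next
    case (Cons g u)
    have "fmul (fmul (emb f) a) b w
        = fmul (emb f) a [] * b (g # u) + (\<Sum>k\<in>{0..length u}. fmul (emb f) a (g # take k u) * b (drop k u))"
      unfolding fmul_def[of "fmul (emb f) a"] Cons
      by (simp only: length_Cons sum.atLeast0_atMost_Suc_shift) simp
    also have "\<dots> = (\<Sum>k\<in>{0..length u}. f g * (a (take k u) * b (drop k u)))"
      by (simp add: fmul_emb mult.assoc)
    also have "\<dots> = fmul (emb f) (fmul a b) w"
      by (simp add: fmul_emb Cons fmul_def[of a b] sum_distrib_left)
    finally show ?thesis by simp
  qed
qed

lemma fmul_emb_add: "fmul (emb f) (\<lambda>w. p w + q w) = (\<lambda>w. fmul (emb f) p w + fmul (emb f) q w)"
  by (rule ext) (simp add: fmul_emb algebra_simps split: list.split)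

lemma fmul_emb_diff: "fmul (emb f) (\<lambda>w. p w - q w) = (\<lambda>w. fmul (emb f) p w - fmul (emb f) q w)"
  by (rule ext) (simp add: fmul_emb algebra_simps split: list.split)

lemma fmul_emb_smult: "fmul (emb f) (\<lambda>w. c * p w) = (\<lambda>w. c * fmul (emb f) p w)"
  by (rule ext) (simp add: fmul_emb algebra_simps split: list.split)

lemma fmul_emb_zero: "fmul (emb f) (\<lambda>w. 0) = (\<lambda>w. 0)"
  by (rule ext) (simp add: fmul_emb split: list.split)

definition basis_supported :: "nat \<Rightarrow> (gen \<Rightarrow> complex) \<Rightarrow> bool" where
  "basis_supported d f \<longleftrightarrow> finite {g. f g \<noteq> 0} \<and> (\<forall>g. f g \<noteq> 0 \<longrightarrow> isB d g)"

lemma basis_supported_ind: "isB d g \<Longrightarrow> basis_supported d (ind g)"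
  by (simp add: basis_supported_def ind_def)

lemma inF_one: "inF d one"
proof -
  have "{w. one w \<noteq> 0} = {[]}" by (auto simp: one_def)
  then show ?thesis by (auto simp: inF_def one_def)
qed

lemma inF_fmul_emb:
  assumes "basis_supported d f" "inF d a"
  shows "inF d (fmul (emb f) a)"
proof -
  have "{w. fmul (emb f) a w \<noteq> 0} \<subseteq> (\<lambda>(g, u). g # u) ` ({g. f g \<noteq> 0} \<times> {w. a w \<noteq> 0})"
    by (auto simp: fmul_emb neq_Nil_conv split: list.splits)
  moreover have "finite ((\<lambda>(g, u). g # u) ` ({g. f g \<noteq> 0} \<times> {w. a w \<noteq> 0}))"
    using assms by (auto simp: basis_supported_def inF_def)
  moreover have "set w \<subseteq> {g. isB d g}" if "fmul (emb f) a w \<noteq> 0" for w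
    using that assms by (cases w) (auto simp: fmul_emb basis_supported_def inF_def)
  ultimately show ?thesis by (auto simp: inF_def intro: finite_subset)
qed

lemma J_fmul_emb:
  assumes "x \<in> J d r" "basis_supported d f"
  shows "fmul (emb f) x \<in> J d r"
  using assms(1)
proof (induction rule: J.induct)
  case J_zero
  then show ?case by (simp add: fmul_emb_zero J.J_zero)
next
  case (J_add x y)
  then show ?case by (simp add: fmul_emb_add J.J_add)
next
  case (J_smult x c)
  then show ?case by (simp add: fmul_emb_smult J.J_smult)
next
  case (J_lie x y a b)
  then show ?case
    by (simp add: fmul_emb_assoc J.J_lie inF_fmul_emb[OF assms(2)])
next
  case (J_pos g a)
  then show ?case
    by (simp add: fmul_emb_assoc J.J_pos inF_fmul_emb[OF assms(2)])
next
  case (J_one a)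
  then show ?case
    by (simp add: fmul_emb_assoc J.J_one inF_fmul_emb[OF assms(2)])
qed

lemma Meq_fmul_emb:
  "Meq d r p q \<Longrightarrow> basis_supported d f \<Longrightarrow> Meq d r (fmul (emb f) p) (fmul (emb f) q)"
  unfolding Meq_def by (drule (1) J_fmul_emb) (simp add: fmul_emb_diff)

lemma gvec_in_J: "isB d g \<Longrightarrow> posB g \<Longrightarrow> gvec g \<in> J d r"
  using J_pos[OF _ _ inF_one] by (simp add: fmul_one_left)

lemma Meq_fmul_gvec_bracket:
  assumes "isB d x" "isB d y" "gvec x \<in> J d r"
  shows "Meq d r (fmul (gvec x) (gvec y)) (emb (brr r x y))"
proof -
  have "lie_rel r x y \<in> J d r"
    using J_lie[OF assms(1,2) inF_one inF_one] by (simp add: fmul_one_left fmul_one_right)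
  moreover have "fmul (gvec y) (gvec x) \<in> J d r"
    using J_fmul_emb[OF assms(3) basis_supported_ind[OF assms(2)]] by (simp add: gvec_emb)
  ultimately have "(\<lambda>w. lie_rel r x y w + fmul (gvec y) (gvec x) w) \<in> J d r"
    by (rule J_add)
  then show ?thesis by (simp add: Meq_def lie_rel_def)
qed

text \<open>The basis element representing \<open>v\<^sup>i\<^sup>j(a, b)\<close>; it differs from \<open>Lv i a j b\<close> only by the
  central term \<open>a\<close> in the case \<open>i = j\<close>, \<open>a = -b > 0\<close>.\<close>
definition basis_gen :: "nat \<Rightarrow> int \<Rightarrow> nat \<Rightarrow> int \<Rightarrow> gen" where
  "basis_gen i a j b =
     (if i < j then V i j a b else if j < i then V j i b a else if a \<le> b then V i i a b else V i i b a)"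

definition vbracket :: "nat \<Rightarrow> int \<Rightarrow> nat \<Rightarrow> int \<Rightarrow> nat \<Rightarrow> int \<Rightarrow> nat \<Rightarrow> int \<Rightarrow> gen \<Rightarrow> complex" where
  "vbracket i a j b k c l e = brA (V i j a b) (V k l c e)"

lemma basis_gen_sym: "basis_gen j b i a = basis_gen i a j b"
  by (auto simp: basis_gen_def)

lemma isB_basis_gen: "i \<in> {1..d} \<Longrightarrow> j \<in> {1..d} \<Longrightarrow> isB d (basis_gen i a j b)"
  by (auto simp: basis_gen_def)

lemma posB_basis_gen: "posB (basis_gen i a j b) \<longleftrightarrow> 0 \<le> a \<or> 0 \<le> b"
  by (auto simp: basis_gen_def)

lemma ind_basis_gen_Cg: "ind (basis_gen i a j b) Cg = 0"
  by (simp add: ind_def basis_gen_def)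

lemma Lv_basis_gen: "\<not> (i = j \<and> a + b = 0 \<and> b < a) \<Longrightarrow> Lv i a j b = ind (basis_gen i a j b)"
  by (rule ext) (auto simp: Lv_def basis_gen_def)

lemma Lv_swap: "Lv i a j b g = Lv j b i a g + hb i a j b * ind Cg g"
  by (cases "b = -a") (auto simp: Lv_def hb_def ind_def)

lemma basis_supported_Lv: "i \<in> {1..d} \<Longrightarrow> j \<in> {1..d} \<Longrightarrow> basis_supported d (Lv i a j b)"
proof -
  assume ij: "i \<in> {1..d}" "j \<in> {1..d}"
  have "{g. Lv i a j b g \<noteq> 0} \<subseteq> {basis_gen i a j b, Cg}"
    by (auto simp: Lv_def basis_gen_def ind_def split: if_splits)
  then show ?thesis
    using finite_subset isB_basis_gen[OF ij] by (fastforce simp: basis_supported_def)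
qed

lemma vbracket_swap_left: "vbracket j b i a = vbracket i a j b"
proof (intro ext)
  fix k c l e g
  show "vbracket j b i a k c l e g = vbracket i a j b k c l e g"
    using Lv_swap[of i a l e g] Lv_swap[of i a k c g] Lv_swap[of j b l e g] Lv_swap[of j b k c g]
    by (simp add: vbracket_def algebra_simps)
qed

lemma vbracket_swap_right: "vbracket i a j b l e k c = vbracket i a j b k c l e"
  by (rule ext) (simp add: vbracket_def algebra_simps)

lemma brA_basis_gen: "brA (basis_gen i a j b) (basis_gen k c l e) = vbracket i a j b k c l e"
  unfolding basis_gen_def
  by (simp only: vbracket_def[symmetric] vbracket_swap_left vbracket_swap_right split: if_split) simp

lemma vact_one: "\<not> (i = j \<and> a + b = 0 \<and> b < a) \<Longrightarrow> vact i a j b one = gvec (basis_gen i a j b)"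
  by (simp add: vact_def fmul_one_right Lv_basis_gen gvec_emb)

lemma Meq_vact:
  "Meq d r p q \<Longrightarrow> i \<in> {1..d} \<Longrightarrow> j \<in> {1..d} \<Longrightarrow> Meq d r (vact i a j b p) (vact i a j b q)"
  unfolding vact_def by (rule Meq_fmul_emb[OF _ basis_supported_Lv])

lemma Meq_vact_pos_gvec:
  assumes ijkl: "i \<in> {1..d}" "j \<in> {1..d}" "k \<in> {1..d}" "l \<in> {1..d}"
    and noncentral: "\<not> (i = j \<and> a + b = 0 \<and> b < a)" and pos: "0 \<le> a \<or> 0 \<le> b"
    and Cg: "vbracket i a j b k c l e Cg = 0"
  shows "Meq d r (vact i a j b (\<lambda>w. z * gvec (basis_gen k c l e) w))
                 (\<lambda>w. z * emb (vbracket i a j b k c l e) w)"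
proof -
  have "gvec (basis_gen i a j b) \<in> J d r"
    using ijkl pos by (intro gvec_in_J) (simp_all add: isB_basis_gen posB_basis_gen)
  then have "Meq d r (fmul (gvec (basis_gen i a j b)) (gvec (basis_gen k c l e)))
                     (emb (brr r (basis_gen i a j b) (basis_gen k c l e)))"
    using ijkl by (intro Meq_fmul_gvec_bracket isB_basis_gen)
  moreover have "brr r (basis_gen i a j b) (basis_gen k c l e) = vbracket i a j b k c l e"
    using Cg by (auto simp: brr_def brA_basis_gen)
  ultimately have "Meq d r (vact i a j b (gvec (basis_gen k c l e))) (emb (vbracket i a j b k c l e))"
    by (simp add: vact_def Lv_basis_gen[OF noncentral] gvec_emb)
  from Meq_smult[OF this, of z] show ?thesis
    by (simp add: vact_def fmul_emb_smult)
qed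

lemma emb_ind: "emb (\<lambda>g. \<alpha> * ind x g) = (\<lambda>w. \<alpha> * gvec x w)"
  by (rule ext) (simp add: emb_def gvec_def ind_def split: list.split)

lemma emb_ind2: "emb (\<lambda>g. \<alpha> * ind x g + \<beta> * ind y g) = (\<lambda>w. \<alpha> * gvec x w + \<beta> * gvec y w)"
  by (rule ext) (simp add: emb_def gvec_def ind_def split: list.split)

lemma emb_zero: "emb (\<lambda>g. 0) = (\<lambda>w. 0)"
  by (rule ext) (simp add: emb_def split: list.split)

subsection \<open>Evaluating the operators \<open>L\<^sub>r\<^sup>i\<^sup>j(m)\<close>\<close>

text \<open>\<open>Lop\<close> sums over the set of \<open>h\<close> whose term is nonzero in \<open>M_r\<close> (a sum that is \<open>0\<close> if this
  set is infinite); the sum may instead be taken over any finite set outside of which the chosen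
  representatives \<open>F h\<close> vanish.\<close>
lemma Meq_Lop:
  assumes ne: "i \<noteq> j \<or> m \<noteq> 0" and ij: "i \<in> {1..d}" "j \<in> {1..d}"
    and pq: "Meq d r p q" and F: "\<And>h. Meq d r (vact i (m - h) j h q) (F h)"
    and T: "finite T" "\<And>h. h \<notin> T \<Longrightarrow> F h = (\<lambda>w. 0)"
  shows "Meq d r (Lop d r i j m p) (\<lambda>w. \<Sum>h\<in>T. (1/2) * F h w)"
proof -
  have Fp: "Meq d r (vact i (m - h) j h p) (F h)" for h
    using Meq_trans[OF Meq_vact[OF pq ij] F] .
  define S where "S = {h. vact i (m - h) j h p \<notin> J d r}"
  have "S \<subseteq> T"
  proof
    fix h assume "h \<in> S"
    then show "h \<in> T"
      using Fp[of h] T(2)[of h] by (cases "h \<in> T") (auto simp: S_def Meq_0_iff)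
  qed
  then have "Meq d r (\<lambda>w. \<Sum>h\<in>S. (1/2) * vact i (m - h) j h p w)
                     (\<lambda>w. \<Sum>h\<in>T. (1/2) * vact i (m - h) j h p w)"
    by (intro Meq_sum_mono_neutral_left[OF T(1)] J_smult) (simp_all add: S_def)
  also have "Meq d r (\<lambda>w. \<Sum>h\<in>T. (1/2) * vact i (m - h) j h p w) (\<lambda>w. \<Sum>h\<in>T. (1/2) * F h w)"
    by (rule Meq_sum[OF T(1)]) (rule Meq_smult[OF Fp])
  finally show ?thesis
    using ne by (simp add: Lop_def S_def)
qed

lemma Meq_Lop_diag_0:
  assumes i: "i \<in> {1..d}"
    and pq: "Meq d r p q" and G: "Meq d r (vact i 0 i 0 q) G"
    and F: "\<And>h. 0 < h \<Longrightarrow> Meq d r (vact i (- h) i h q) (F h)"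
    and T: "finite T" "T \<subseteq> {0<..}" "\<And>h. 0 < h \<Longrightarrow> h \<notin> T \<Longrightarrow> F h = (\<lambda>w. 0)"
  shows "Meq d r (Lop d r i i 0 p) (\<lambda>w. (1/2) * G w + (\<Sum>h\<in>T. F h w))"
proof -
  have Fp: "0 < h \<Longrightarrow> Meq d r (vact i (- h) i h p) (F h)" for h
    using Meq_trans[OF Meq_vact[OF pq i i] F] .
  define S where "S = {h. 0 < h \<and> vact i (- h) i h p \<notin> J d r}"
  have "S \<subseteq> T"
  proof
    fix h assume "h \<in> S"
    then show "h \<in> T"
      using Fp[of h] T(3)[of h] by (cases "h \<in> T") (auto simp: S_def Meq_0_iff)
  qed
  then have "Meq d r (\<lambda>w. \<Sum>h\<in>S. vact i (- h) i h p w) (\<lambda>w. \<Sum>h\<in>T. vact i (- h) i h p w)"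
    using T(2) by (intro Meq_sum_mono_neutral_left[OF T(1)]) (auto simp: S_def)
  also have "Meq d r (\<lambda>w. \<Sum>h\<in>T. vact i (- h) i h p w) (\<lambda>w. \<Sum>h\<in>T. F h w)"
    by (rule Meq_sum[OF T(1)], rule Fp) (use T(2) in auto)
  finally have sums: "Meq d r (\<lambda>w. \<Sum>h\<in>S. vact i (- h) i h p w) (\<lambda>w. \<Sum>h\<in>T. F h w)" .
  have L: "Lop d r i i 0 p = (\<lambda>w. (1/2) * vact i 0 i 0 p w + (\<Sum>h\<in>S. vact i (- h) i h p w))"
    by (simp add: Lop_def S_def)
  show ?thesis
    unfolding L by (rule Meq_add[OF Meq_smult sums], rule Meq_trans[OF Meq_vact[OF pq i i] G])
qed

lemma vbracket_diag_mixed: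
  assumes "i \<noteq> j"
  shows "vbracket j (-1 - h) j h i a j b =
    (\<lambda>g. ((if h = -b then of_int (-b) else 0) + (if h = b - 1 then of_int (-b) else 0))
          * ind (basis_gen i a j (b - 1)) g)"
  using assms by (intro ext) (auto simp: vbracket_def hb_def Lv_def basis_gen_def ind_def)

lemma vbracket_mixed_mixed:
  assumes "i \<noteq> j" "n < 0" "b < 0"
  shows "vbracket i (-1 - h) j h i n j b =
    (\<lambda>g. (if h = -b then of_int (-b) else 0) * ind (basis_gen i (b - 1) i n) g
        + (if h = n - 1 then of_int (-n) else 0) * ind (basis_gen j b j (n - 1)) g)"
  using assms by (intro ext) (auto simp: vbracket_def hb_def Lv_def basis_gen_def ind_def)

lemma vbracket_diag_same:
  assumes "0 < h" "m < 0" "n < 0"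
  shows "vbracket i (-h) i h i m i n =
    (\<lambda>g. ((if h = -m then of_int (-m) else 0) + (if h = -n then of_int (-n) else 0))
          * ind (basis_gen i m i n) g)"
  using assms by (intro ext) (auto simp: vbracket_def hb_def Lv_def basis_gen_def ind_def)

lemma vbracket_diag_other: "i \<noteq> j \<Longrightarrow> vbracket i a i b j c j e = (\<lambda>g. 0)"
  by (rule ext) (simp add: vbracket_def hb_def)

lemma vbracket_zero_modes: "vbracket i 0 i 0 k c l e = (\<lambda>g. 0)"
  by (rule ext) (simp add: vbracket_def hb_def)

subsection \<open>Building \<open>v\<^sup>i\<^sup>j(m, n) \<one>\<close> with the operators \<open>L\<^sub>r\<close>\<close>

definition proportional :: "nat \<Rightarrow> complex \<Rightarrow> tens \<Rightarrow> gen \<Rightarrow> bool" where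
  "proportional d r p x \<longleftrightarrow> (\<exists>c. c \<noteq> 0 \<and> Meq d r p (\<lambda>w. c * gvec x w))"

lemma proportionalI: "c \<noteq> 0 \<Longrightarrow> Meq d r p (\<lambda>w. c * gvec x w) \<Longrightarrow> proportional d r p x"
  unfolding proportional_def by blast

lemma proportional_Lop_mixed_minus2_one:
  assumes "i \<noteq> j" "i \<in> {1..d}" "j \<in> {1..d}"
  shows "proportional d r (Lop d r i j (-2) one) (basis_gen i (-1) j (-1))"
proof -
  define F where "F h = (if h = -1 then gvec (basis_gen i (-1) j (-1)) else (\<lambda>w. 0))" for h :: int
  have "Meq d r (vact i (-2 - h) j h one) (F h)" for h
  proof (cases "h = -1")
    case True
    then show ?thesis using assms by (simp add: F_def vact_one Meq_refl)
  next
    case False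
    then have "gvec (basis_gen i (-2 - h) j h) \<in> J d r"
      using assms by (intro gvec_in_J) (auto simp: isB_basis_gen posB_basis_gen)
    then show ?thesis using False assms by (simp add: F_def vact_one Meq_0_iff)
  qed
  then have "Meq d r (Lop d r i j (-2) one) (\<lambda>w. \<Sum>h\<in>{-1}. (1/2) * F h w)"
    using assms by (intro Meq_Lop[OF _ _ _ Meq_refl]) (auto simp: F_def)
  then show ?thesis
    unfolding proportional_def by (intro exI[of _ "1/2"]) (simp add: F_def)
qed

lemma proportional_Lop_diag_minus1:
  assumes ij: "i \<noteq> j" "i \<in> {1..d}" "j \<in> {1..d}" and ab: "a < 0" "b < 0"
    and p: "proportional d r p (basis_gen i a j b)"
  shows "proportional d r (Lop d r j j (-1) p) (basis_gen i a j (b - 1))"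
proof -
  obtain c where c: "c \<noteq> 0" "Meq d r p (\<lambda>w. c * gvec (basis_gen i a j b) w)"
    using p by (auto simp: proportional_def)
  define F where "F h = (\<lambda>w. c * emb (vbracket j (-1 - h) j h i a j b) w)" for h
  have "Meq d r (vact j (-1 - h) j h (\<lambda>w. c * gvec (basis_gen i a j b) w)) (F h)" for h
    unfolding F_def
    by (rule Meq_vact_pos_gvec) (use ij in \<open>auto simp: vbracket_diag_mixed ind_basis_gen_Cg\<close>)
  then have "Meq d r (Lop d r j j (-1) p) (\<lambda>w. \<Sum>h\<in>{-b, b - 1}. (1/2) * F h w)"
    using ij by (intro Meq_Lop[OF _ _ _ c(2)]) (auto simp: F_def vbracket_diag_mixed emb_zero)
  also have "(\<lambda>w. \<Sum>h\<in>{-b, b - 1}. (1/2) * F h w) = (\<lambda>w. (c * of_int (-b)) * gvec (basis_gen i a j (b - 1)) w)"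
    using ab by (simp only: F_def vbracket_diag_mixed[OF ij(1)] emb_ind) (simp add: algebra_simps)
  finally show ?thesis
    by (rule proportionalI[rotated]) (use c(1) ab in simp)
qed

lemma proportional_Lop_diag_minus1_iterate:
  assumes "i \<noteq> j" "i \<in> {1..d}" "j \<in> {1..d}" "a < 0" "b < 0"
    and "proportional d r p (basis_gen i a j b)"
  shows "proportional d r ((Lop d r j j (-1) ^^ k) p) (basis_gen i a j (b - int k))"
proof (induction k)
  case 0
  then show ?case using assms(6) by simp
next
  case (Suc k)
  then have "proportional d r (Lop d r j j (-1) ((Lop d r j j (-1) ^^ k) p)) (basis_gen i a j (b - int k - 1))"
    using assms by (intro proportional_Lop_diag_minus1) auto
  then show ?case by (simp add: algebra_simps)
qed

lemma Meq_Lop_mixed_minus1: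
  assumes ij: "i \<noteq> j" "i \<in> {1..d}" "j \<in> {1..d}" and nb: "n < 0" "b < 0"
    and p: "Meq d r p (\<lambda>w. c * gvec (basis_gen i n j b) w)"
  shows "Meq d r (Lop d r i j (-1) p)
           (\<lambda>w. (c * of_int (-b) / 2) * gvec (basis_gen i (b - 1) i n) w
              + (c * of_int (-n) / 2) * gvec (basis_gen j b j (n - 1)) w)"
proof -
  define F where "F h = (\<lambda>w. c * emb (vbracket i (-1 - h) j h i n j b) w)" for h
  have "Meq d r (vact i (-1 - h) j h (\<lambda>w. c * gvec (basis_gen i n j b) w)) (F h)" for h
    unfolding F_def
    by (rule Meq_vact_pos_gvec) (use ij nb in \<open>auto simp: vbracket_mixed_mixed ind_basis_gen_Cg\<close>)
  then have "Meq d r (Lop d r i j (-1) p) (\<lambda>w. \<Sum>h\<in>{-b, n - 1}. (1/2) * F h w)"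
    using ij nb by (intro Meq_Lop[OF _ _ _ p]) (auto simp: F_def vbracket_mixed_mixed emb_zero)
  also have "(\<lambda>w. \<Sum>h\<in>{-b, n - 1}. (1/2) * F h w)
      = (\<lambda>w. (c * of_int (-b) / 2) * gvec (basis_gen i (b - 1) i n) w
           + (c * of_int (-n) / 2) * gvec (basis_gen j b j (n - 1)) w)"
    using nb by (simp only: F_def vbracket_mixed_mixed[OF ij(1) nb] emb_ind2) (simp add: algebra_simps)
  finally show ?thesis .
qed

lemma Meq_Lop_diag_0_gvec:
  assumes ij: "i \<noteq> j" "i \<in> {1..d}" "j \<in> {1..d}" and mn: "m < 0" "n < 0"
    and p: "Meq d r p (\<lambda>w. c1 * gvec (basis_gen i m i n) w + c2 * gvec (basis_gen j b j e) w)"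
  shows "Meq d r (Lop d r i i 0 p) (\<lambda>w. (c1 * of_int (-m - n)) * gvec (basis_gen i m i n) w)"
proof -
  define q where "q = (\<lambda>w. c1 * gvec (basis_gen i m i n) w + c2 * gvec (basis_gen j b j e) w)"
  define F where "F h = (\<lambda>w. c1 * ((if h = -m then of_int (-m) else 0) + (if h = -n then of_int (-n) else 0))
                               * gvec (basis_gen i m i n) w)" for h
  have vact_q: "vact i a i a' q = (\<lambda>w. vact i a i a' (\<lambda>w. c1 * gvec (basis_gen i m i n) w) w
                                    + vact i a i a' (\<lambda>w. c2 * gvec (basis_gen j b j e) w) w)" for a a'
    by (simp add: q_def vact_def fmul_emb_add)
  have "Meq d r (vact i 0 i 0 q) (\<lambda>w. c1 * emb (vbracket i 0 i 0 i m i n) w + c2 * emb (vbracket i 0 i 0 j b j e) w)"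
    unfolding vact_q by (intro Meq_add Meq_vact_pos_gvec) (use ij in \<open>auto simp: vbracket_zero_modes\<close>)
  then have G: "Meq d r (vact i 0 i 0 q) (\<lambda>w. 0)"
    by (simp add: vbracket_zero_modes emb_zero)
  have "Meq d r (vact i (-h) i h q) (F h)" if "0 < h" for h
  proof -
    have "Meq d r (vact i (-h) i h q)
            (\<lambda>w. c1 * emb (vbracket i (-h) i h i m i n) w + c2 * emb (vbracket i (-h) i h j b j e) w)"
      unfolding vact_q
      by (intro Meq_add Meq_vact_pos_gvec)
        (use ij mn that in \<open>auto simp: vbracket_diag_same vbracket_diag_other ind_basis_gen_Cg\<close>)
    then show ?thesis
      by (simp only: vbracket_diag_same[OF that mn] vbracket_diag_other[OF ij(1)] emb_ind emb_zero)
        (simp add: F_def mult.assoc)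
  qed
  then have "Meq d r (Lop d r i i 0 p) (\<lambda>w. (1/2) * 0 + (\<Sum>h\<in>{-m, -n}. F h w))"
    using mn by (intro Meq_Lop_diag_0[OF ij(2) p[folded q_def] G]) (auto simp: F_def)
  also have "(\<lambda>w. (1/2) * 0 + (\<Sum>h\<in>{-m, -n}. F h w)) = (\<lambda>w. (c1 * of_int (-m - n)) * gvec (basis_gen i m i n) w)"
    by (cases "m = n") (auto simp: F_def algebra_simps)
  finally show ?thesis .
qed

lemma proportional_Lop_diag_0_Lop_mixed_minus1:
  assumes ij: "i \<noteq> j" "i \<in> {1..d}" "j \<in> {1..d}" and nb: "n < 0" "b < 0"
    and p: "proportional d r p (basis_gen i n j b)"
  shows "proportional d r (Lop d r i i 0 (Lop d r i j (-1) p)) (basis_gen i (b - 1) i n)"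
proof -
  obtain c where c: "c \<noteq> 0" "Meq d r p (\<lambda>w. c * gvec (basis_gen i n j b) w)"
    using p by (auto simp: proportional_def)
  have L: "Meq d r (Lop d r i i 0 (Lop d r i j (-1) p))
          (\<lambda>w. (c * of_int (-b) / 2 * of_int (-(b - 1) - n)) * gvec (basis_gen i (b - 1) i n) w)"
    using nb by (intro Meq_Lop_diag_0_gvec[OF ij _ _ Meq_Lop_mixed_minus1[OF ij nb c(2)]]) auto
  have "of_int (-b) \<noteq> (0::complex)" "of_int (-(b - 1) - n) \<noteq> (0::complex)"
    using nb by (simp_all only: of_int_eq_0_iff)
  then show ?thesis
    using c(1) by (intro proportionalI[OF _ L]) simp
qed

lemma proportional_imp_Meq_gvec:
  assumes "proportional d r p x"
  shows "\<exists>\<alpha>. \<alpha> \<noteq> 0 \<and> Meq d r (gvec x) (\<lambda>w. \<alpha> * p w)"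
proof -
  obtain c where "c \<noteq> 0" "Meq d r p (\<lambda>w. c * gvec x w)"
    using assms by (auto simp: proportional_def)
  moreover from Meq_smult[OF this(2), of "1/c"] this(1)
  have "Meq d r (\<lambda>w. (1/c) * p w) (gvec x)" by simp
  ultimately show ?thesis
    by (intro exI[of _ "1/c"]) (simp add: Meq_sym)
qed

lemma proportional_Lop_word_mixed:
  assumes ij: "i \<noteq> j" "i \<in> {1..d}" "j \<in> {1..d}" and mn: "m < 0" "n < 0"
  shows "proportional d r
           ((Lop d r i i (-1) ^^ nat (- m - 1)) ((Lop d r j j (-1) ^^ nat (- n - 1)) (Lop d r i j (-2) one)))
           (basis_gen i m j n)"
proof -
  have "proportional d r ((Lop d r j j (-1) ^^ nat (- n - 1)) (Lop d r i j (-2) one)) (basis_gen j n i (-1))"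
    using proportional_Lop_diag_minus1_iterate[OF ij _ _ proportional_Lop_mixed_minus2_one[OF ij],
            where k = "nat (- n - 1)"] mn
    by (simp add: basis_gen_sym)
  from proportional_Lop_diag_minus1_iterate[OF ij(1)[symmetric] ij(3,2) mn(2) _ this, where k = "nat (- m - 1)"] mn
  show ?thesis by (simp add: basis_gen_sym)
qed

lemma proportional_Lop_word_diag:
  assumes ij: "i \<noteq> j" "i \<in> {1..d}" "j \<in> {1..d}" and mn: "m \<le> -2" "n < 0"
  shows "proportional d r
           (Lop d r i i 0 (Lop d r i j (-1)
              ((Lop d r i i (-1) ^^ nat (- n - 1)) ((Lop d r j j (-1) ^^ nat (- m - 2)) (Lop d r i j (-2) one)))))
           (basis_gen i m i n)"
proof -
  have "proportional d r ((Lop d r j j (-1) ^^ nat (- m - 2)) (Lop d r i j (-2) one)) (basis_gen j (m + 1) i (-1))"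
    using proportional_Lop_diag_minus1_iterate[OF ij _ _ proportional_Lop_mixed_minus2_one[OF ij],
            where k = "nat (- m - 2)"] mn
    by (simp add: basis_gen_sym add.commute)
  from proportional_Lop_diag_minus1_iterate[OF ij(1)[symmetric] ij(3,2) _ _ this, where k = "nat (- n - 1)"] mn
  have "proportional d r ((Lop d r i i (-1) ^^ nat (- n - 1)) ((Lop d r j j (-1) ^^ nat (- m - 2)) (Lop d r i j (-2) one)))
          (basis_gen i n j (m + 1))"
    by (simp add: basis_gen_sym)
  from proportional_Lop_diag_0_Lop_mixed_minus1[OF ij mn(2) _ this] mn
  show ?thesis by simp
qed

theorem lemma3p3:
  fixes d :: nat and r :: complex
  assumes "2 \<le> d"
  shows "(\<forall>i j (m::int) (n::int). 1 \<le> i \<and> i \<le> d \<and> 1 \<le> j \<and> j \<le> d \<and> i \<noteq> j \<and> m < 0 \<and> n < 0 \<longrightarrow>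
           (\<exists>\<alpha>::complex. \<alpha> \<noteq> 0 \<and>
              Meq d r (vact i m j n one)
                (\<lambda>w. \<alpha> * ((Lop d r i i (-1) ^^ nat (- m - 1))
                          ((Lop d r j j (-1) ^^ nat (- n - 1))
                            (Lop d r i j (-2) one))) w)))
       \<and> (\<forall>i (m::int) (n::int). 1 \<le> i \<and> i \<le> d \<and> m < 0 \<and> n < 0 \<and> m \<le> -2 \<longrightarrow>
           (\<forall>j. 1 \<le> j \<and> j \<le> d \<and> j \<noteq> i \<longrightarrow>
             (\<exists>\<beta>::complex. \<beta> \<noteq> 0 \<and>
                Meq d r (vact i m i n one)
                  (\<lambda>w. \<beta> * (Lop d r i i 0
                             (Lop d r i j (-1)
                               ((Lop d r i i (-1) ^^ nat (- n - 1))
                                 ((Lop d r j j (-1) ^^ nat (- m - 2))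
                                   (Lop d r i j (-2) one))))) w))))"
proof (intro conjI allI impI)
  fix i j :: nat and m n :: int
  assume "1 \<le> i \<and> i \<le> d \<and> 1 \<le> j \<and> j \<le> d \<and> i \<noteq> j \<and> m < 0 \<and> n < 0"
  then show "\<exists>\<alpha>. \<alpha> \<noteq> 0 \<and> Meq d r (vact i m j n one)
               (\<lambda>w. \<alpha> * ((Lop d r i i (-1) ^^ nat (- m - 1))
                         ((Lop d r j j (-1) ^^ nat (- n - 1)) (Lop d r i j (-2) one))) w)"
    using proportional_imp_Meq_gvec[OF proportional_Lop_word_mixed] by (simp add: vact_one)
next
  fix i j :: nat and m n :: int
  assume "1 \<le> i \<and> i \<le> d \<and> m < 0 \<and> n < 0 \<and> m \<le> -2" "1 \<le> j \<and> j \<le> d \<and> j \<noteq> i"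
  then show "\<exists>\<beta>. \<beta> \<noteq> 0 \<and> Meq d r (vact i m i n one)
               (\<lambda>w. \<beta> * Lop d r i i 0 (Lop d r i j (-1) ((Lop d r i i (-1) ^^ nat (- n - 1))
                         ((Lop d r j j (-1) ^^ nat (- m - 2)) (Lop d r i j (-2) one)))) w)"
    using proportional_imp_Meq_gvec[OF proportional_Lop_word_diag] by (simp add: vact_one)
qed

end
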